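(* Assume (A1)–(A2) below. There is a constant $\hat C_1>0$ depending only on the bounds in (A1)–(A2) such that for every $\varepsilon\in[0,\bar\varepsilon]$, $\gamma\in[\underline\gamma,\bar\gamma]$ and all $(\rho,w),(\hat\rho,\hat w)\in L^2(0,\ell)^2$ with $\underline\rho\le\rho,\hat\rho\le\bar\rho$, $-\bar w\le w,\hat w\le\bar w$ a.e., $$-\int_0^\ell\gamma\,(|w|w-|\hat w|\hat w)\,a\,(\rho w-\hat\rho\hat w)\,dx\le\hat C_1\mathcal{H}_\varepsilon(\boldsymbol u|\hat{\boldsymbol u})-2\mathcal{D}(\boldsymbol u|\hat{\boldsymbol u}),$$ where $\boldsymbol u=(\rho,w)$, $\hat{\boldsymbol u}=(\hat\rho,\hat w)$ and $\mathcal{D}(\boldsymbol u|\hat{\boldsymbol u})=\frac1{16}\int_0^\ell\gamma a\hat\rho(|w|+|\hat w|)(w-\hat w)^2\,dx$.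
   Context: Fix $\ell>0$, $a:[0,\ell]\to\mathbb{R}$, a constant $g$, $z:[0,\ell]\to\mathbb{R}$, smooth strictly convex $P:(0,\infty)\to\mathbb{R}$. (A1): positive constants $\underline\rho\le\bar\rho$, $\bar w$, $\bar\varepsilon$ with $\rho P''(\rho)\ge4\bar\varepsilon^2\bar w^2$ for $\underline\rho\le\rho\le\bar\rho$; $0<\underline a\le a\le\bar a$; $|gz|\le\bar g\bar z$. (A2): $0\le\varepsilon\le\bar\varepsilon$, $0<\underline\gamma\le\gamma\le\bar\gamma$, states satisfy $\underline\rho\le\rho\le\bar\rho$, $-\bar w\le w\le\bar w$. Relative energy: $\mathcal{H}_\varepsilon(\boldsymbol u|\hat{\boldsymbol u})=\mathcal{H}_\varepsilon(\boldsymbol u)-\mathcal{H}_\varepsilon(\hat{\boldsymbol u})-\int_0^\ell a[(\varepsilon^2\hat w^2/2+P'(\hat\rho)+gz)(\rho-\hat\rho)+\varepsilon^2\hat\rho\hat w(w-\hat w)]dx$ with $\mathcal{H}_\varepsilon(\rho,w)=\int_0^\ell a(\varepsilon^2\rho w^2/2+P(\rho)+gz\rho)dx$. *)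

theory Defs
  imports "HOL-Analysis.Analysis"
begin

definition strictly_convex_on :: "real set \<Rightarrow> (real \<Rightarrow> real) \<Rightarrow> bool" where
  "strictly_convex_on S f \<longleftrightarrow>
     (\<forall>x\<in>S. \<forall>y\<in>S. \<forall>t. x \<noteq> y \<and> 0 < t \<and> t < 1 \<longrightarrow>
        f (t * x + (1 - t) * y) < t * f x + (1 - t) * f y)"

definition smooth_pos :: "(real \<Rightarrow> real) \<Rightarrow> bool" where
  "smooth_pos P \<longleftrightarrow> (\<forall>n x. 0 < x \<longrightarrow> (deriv ^^ n) P differentiable (at x))"

definition intl :: "real \<Rightarrow> (real \<Rightarrow> real) \<Rightarrow> real" where
  "intl l f = integral\<^sup>L (lebesgue_on {0..l}) f"

definition Henergy ::
  "real \<Rightarrow> (real \<Rightarrow> real) \<Rightarrow> real \<Rightarrow> (real \<Rightarrow> real) \<Rightarrow> (real \<Rightarrow> real) \<Rightarrow> real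
     \<Rightarrow> (real \<Rightarrow> real) \<Rightarrow> (real \<Rightarrow> real) \<Rightarrow> real" where
  "Henergy l a g z P eps rho w =
     intl l (\<lambda>x. a x * (eps\<^sup>2 * rho x * (w x)\<^sup>2 / 2 + P (rho x) + g * z x * rho x))"

definition Hrel ::
  "real \<Rightarrow> (real \<Rightarrow> real) \<Rightarrow> real \<Rightarrow> (real \<Rightarrow> real) \<Rightarrow> (real \<Rightarrow> real) \<Rightarrow> real
     \<Rightarrow> (real \<Rightarrow> real) \<Rightarrow> (real \<Rightarrow> real) \<Rightarrow> (real \<Rightarrow> real) \<Rightarrow> (real \<Rightarrow> real) \<Rightarrow> real" where
  "Hrel l a g z P eps rho w rh wh =
     Henergy l a g z P eps rho w - Henergy l a g z P eps rh wh
     - intl l (\<lambda>x. a x * ((eps\<^sup>2 * (wh x)\<^sup>2 / 2 + deriv P (rh x) + g * z x) * (rho x - rh x)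
                         + eps\<^sup>2 * rh x * wh x * (w x - wh x)))"

definition Drel ::
  "real \<Rightarrow> (real \<Rightarrow> real) \<Rightarrow> real
     \<Rightarrow> (real \<Rightarrow> real) \<Rightarrow> (real \<Rightarrow> real) \<Rightarrow> (real \<Rightarrow> real) \<Rightarrow> (real \<Rightarrow> real) \<Rightarrow> real" where
  "Drel l a gam rho w rh wh =
     (1/16) * intl l (\<lambda>x. gam * a x * rh x * (\<bar>w x\<bar> + \<bar>wh x\<bar>) * (w x - wh x)\<^sup>2)"

definition L2on :: "real \<Rightarrow> (real \<Rightarrow> real) \<Rightarrow> bool" where
  "L2on l f \<longleftrightarrow> f \<in> borel_measurable (lebesgue_on {0..l})
                 \<and> integrable (lebesgue_on {0..l}) (\<lambda>x. (f x)\<^sup>2)"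

end

theory Submission
  imports Defs
begin

text \<open>Everything reduces to a pointwise inequality. Writing \<open>Q = |w|w - |v|v\<close>, the
  monotonicity of \<open>s \<mapsto> |s|s\<close> in the quantitative form \<open>Q (w - v) \<ge> (|w| + |v|) (w - v)\<^sup>2 / 2\<close>
  turns the friction term into minus the dissipation density, up to errors of size
  \<open>|\<rho> - \<rho>'| |w - v|\<close> which Young's inequality converts into a multiple of \<open>(\<rho> - \<rho>')\<^sup>2\<close>.
  The relative energy density dominates \<open>(\<rho> - \<rho>')\<^sup>2\<close>: the Taylor remainder of \<open>P\<close> does so by
  the bound \<open>\<rho> P'' \<ge> 4 \<epsilon>\<^sup>2 w\<^sup>2\<close> of (A1), and this margin is exactly enough to absorb the relative kinetic
  energy, which can be negative. Integration is harmless since all integrands are bounded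
  and measurable on the finite measure space \<open>[0, l]\<close>.\<close>

lemma signed_square_diff_mult_ge:
  fixes w v :: real
  shows "(\<bar>w\<bar> + \<bar>v\<bar>) * (w - v)\<^sup>2 / 2 \<le> (\<bar>w\<bar> * w - \<bar>v\<bar> * v) * (w - v)"
proof -
  have "(\<bar>w\<bar> * w - \<bar>v\<bar> * v) * (w - v) - (\<bar>w\<bar> + \<bar>v\<bar>) * (w - v)\<^sup>2 / 2
      = (\<bar>w\<bar> + \<bar>v\<bar>) * (if (0 \<le> w) = (0 \<le> v) then (w - v)\<^sup>2 else (w + v)\<^sup>2) / 2"
    by (cases "0 \<le> w"; cases "0 \<le> v") (simp_all add: power2_eq_square field_simps)
  moreover have "0 \<le> (\<bar>w\<bar> + \<bar>v\<bar>) * (if (0 \<le> w) = (0 \<le> v) then (w - v)\<^sup>2 else (w + v)\<^sup>2) / 2"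
    by simp
  ultimately show ?thesis by linarith
qed

lemma abs_signed_square_diff_le:
  fixes w v :: real
  shows "\<bar>\<bar>w\<bar> * w - \<bar>v\<bar> * v\<bar> \<le> (\<bar>w\<bar> + \<bar>v\<bar>) * \<bar>w - v\<bar>"
proof (cases "(0 \<le> w) = (0 \<le> v)")
  case True
  then have "\<bar>w\<bar> * w - \<bar>v\<bar> * v = (\<bar>w\<bar> + \<bar>v\<bar>) * (w - v)"
    by (cases "0 \<le> w") (auto simp: algebra_simps)
  then show ?thesis by (simp add: abs_mult)
next
  case False
  then have "\<bar>\<bar>w\<bar> * w - \<bar>v\<bar> * v\<bar> = w\<^sup>2 + v\<^sup>2" "(\<bar>w\<bar> + \<bar>v\<bar>) * \<bar>w - v\<bar> = (w - v)\<^sup>2"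
    and "w * v \<le> 0"
    by (cases "0 \<le> w";
        auto simp: power2_eq_square algebra_simps mult_nonneg_nonpos mult_nonpos_nonneg)+
  then show ?thesis by (simp add: power2_eq_square algebra_simps)
qed

lemma young_cross_term_le:
  fixes p x y c :: real
  assumes "0 < p"
  shows "c * x * y - 3/8 * p * x\<^sup>2 \<le> 2/3 * c\<^sup>2 * y\<^sup>2 / p"
proof -
  have "p * (c * x * y - 3/8 * p * x\<^sup>2) \<le> 2/3 * c\<^sup>2 * y\<^sup>2"
    using zero_le_power2[of "p * x - 4/3 * c * y"] by (simp add: power2_eq_square algebra_simps)
  then show ?thesis using assms by (simp add: field_simps)
qed

lemma friction_density_le:
  fixes p q w v wb rlo :: real
  assumes "0 < rlo" "rlo \<le> p" "\<bar>w\<bar> \<le> wb" "\<bar>v\<bar> \<le> wb"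
  shows "q * (\<bar>w\<bar> + \<bar>v\<bar>) * (w - v)\<^sup>2 / 8 - (\<bar>w\<bar> * w - \<bar>v\<bar> * v) * (p * w - q * v)
    \<le> 25/12 * wb^3 * (p - q)\<^sup>2 / rlo"
proof -
  define Q S d r where "Q = \<bar>w\<bar> * w - \<bar>v\<bar> * v" and "S = \<bar>w\<bar> + \<bar>v\<bar>" and "d = w - v" and "r = p - q"
  have p: "0 < p" using assms by linarith
  have S: "0 \<le> S" "S \<le> 2 * wb" using assms by (auto simp: S_def)
  have d: "\<bar>d\<bar> \<le> 2 * wb" using assms by (auto simp: d_def)
  have split: "q * S * d\<^sup>2 / 8 - Q * (p * w - q * v)
      = - p * (Q * d) + p * S * d\<^sup>2 / 8 - Q * r * v - r * S * d\<^sup>2 / 8"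
    by (simp add: d_def r_def field_simps power2_eq_square)
  have "p * (S * d\<^sup>2 / 2) \<le> p * (Q * d)"
    using signed_square_diff_mult_ge[of w v] p unfolding Q_def S_def d_def
    by (intro mult_left_mono) auto
  moreover have "- Q * r * v \<le> S * \<bar>d\<bar> * \<bar>r\<bar> * wb"
  proof -
    have "- Q * r * v \<le> \<bar>Q\<bar> * \<bar>r\<bar> * \<bar>v\<bar>" by (simp add: abs_mult[symmetric] abs_le_iff)
    also have "\<dots> \<le> S * \<bar>d\<bar> * \<bar>r\<bar> * wb"
      using abs_signed_square_diff_le[of w v] assms(4) S
      by (intro mult_mono) (auto simp: Q_def S_def d_def)
    finally show ?thesis .
  qed
  moreover have "- r * S * d\<^sup>2 / 8 \<le> S * \<bar>d\<bar> * \<bar>r\<bar> * wb / 4"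
  proof -
    have "- r * (S * d\<^sup>2) \<le> \<bar>r\<bar> * (S * d\<^sup>2)"
      using S by (intro mult_right_mono) auto
    also have "\<dots> = \<bar>r\<bar> * S * (\<bar>d\<bar> * \<bar>d\<bar>)"
      by (simp add: power2_eq_square)
    also have "\<dots> \<le> \<bar>r\<bar> * S * (\<bar>d\<bar> * (2 * wb))"
      using S d by (intro mult_left_mono) auto
    finally show ?thesis by (simp add: algebra_simps)
  qed
  ultimately have "q * S * d\<^sup>2 / 8 - Q * (p * w - q * v)
      \<le> S * (5/4 * wb * \<bar>d\<bar> * \<bar>r\<bar> - 3/8 * p * \<bar>d\<bar>\<^sup>2)"
    unfolding split by (simp add: algebra_simps power2_eq_square)
  also have "\<dots> \<le> S * (2/3 * (5/4 * wb)\<^sup>2 * \<bar>r\<bar>\<^sup>2 / p)"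
    using young_cross_term_le[OF p, of "5/4 * wb" "\<bar>d\<bar>" "\<bar>r\<bar>"] S by (intro mult_left_mono) auto
  also have "\<dots> \<le> (2 * wb) * (2/3 * (5/4 * wb)\<^sup>2 * \<bar>r\<bar>\<^sup>2 / rlo)"
    using S assms by (intro mult_mono divide_left_mono) auto
  also have "\<dots> = 25/12 * wb^3 * (p - q)\<^sup>2 / rlo"
    by (simp add: r_def power2_eq_square power3_eq_cube)
  finally show ?thesis by (simp add: Q_def S_def d_def)
qed

lemma taylor_remainder_lower_bound:
  fixes P :: "real \<Rightarrow> real"
  assumes P1: "\<And>t. rlo \<le> t \<Longrightarrow> t \<le> rhi \<Longrightarrow> P differentiable (at t)"
    and P2: "\<And>t. rlo \<le> t \<Longrightarrow> t \<le> rhi \<Longrightarrow> deriv P differentiable (at t)"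
    and curvature: "\<And>t. rlo \<le> t \<Longrightarrow> t \<le> rhi \<Longrightarrow> 4 * E \<le> t * deriv (deriv P) t"
    and "0 < rlo" "0 \<le> E" "rlo \<le> p" "p \<le> rhi" "rlo \<le> q" "q \<le> rhi"
  shows "2 * E * (p - q)\<^sup>2 \<le> max p q * (P p - P q - deriv P q * (p - q))"
proof (cases "p = q")
  case False
  let ?D = "\<lambda>m. (deriv ^^ m) P"
  have "DERIV (?D m) t :> ?D (Suc m) t" if "m < 2" "rlo \<le> t" "t \<le> rhi" for m t
    using that P1 P2 by (auto simp: less_2_cases_iff DERIV_deriv_iff_real_differentiable)
  then obtain t where t: "min p q < t" "t < max p q"
    and taylor: "P p = (\<Sum>m<2. ?D m q / fact m * (p - q) ^ m) + ?D 2 t / fact 2 * (p - q) ^ 2"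
    using Taylor[of 2 ?D P rlo rhi q p] assms False by (auto simp: min_def max_def split: if_splits)
  then have remainder: "P p - P q - deriv P q * (p - q) = deriv (deriv P) t / 2 * (p - q)\<^sup>2"
    by (simp add: numeral_2_eq_2 lessThan_Suc)
  have t_range: "rlo \<le> t" "t \<le> rhi" "0 < t" using t assms by auto
  have curv: "4 * E \<le> t * deriv (deriv P) t" using curvature t_range by blast
  then have "0 \<le> t * deriv (deriv P) t" using \<open>0 \<le> E\<close> by linarith
  then have "0 \<le> deriv (deriv P) t" using t_range by (simp add: zero_le_mult_iff)
  have "2 * E * (p - q)\<^sup>2 \<le> t * (deriv (deriv P) t / 2 * (p - q)\<^sup>2)"
    using mult_right_mono[OF curv zero_le_power2[of "p - q"]] by (simp add: field_simps)
  also have "\<dots> \<le> max p q * (deriv (deriv P) t / 2 * (p - q)\<^sup>2)"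
    using t \<open>0 \<le> deriv (deriv P) t\<close> by (intro mult_right_mono) auto
  finally show ?thesis unfolding remainder .
qed simp

text \<open>The integrand of \<open>Hrel\<close> divided by \<open>a\<close>: the gravitational terms cancel, leaving the
  relative kinetic energy and the Bregman remainder of \<open>P\<close>.\<close>
definition relative_energy_density ::
    "(real \<Rightarrow> real) \<Rightarrow> real \<Rightarrow> real \<Rightarrow> real \<Rightarrow> real \<Rightarrow> real \<Rightarrow> real" where
  "relative_energy_density P e p w q v =
     e\<^sup>2 * (p / 2 * (w - v)\<^sup>2 + (p - q) * v * (w - v)) + (P p - P q - deriv P q * (p - q))"

lemma relative_kinetic_ge_quadratic:
  fixes e p q w v E :: real
  assumes "0 < p" "e\<^sup>2 * v\<^sup>2 \<le> E"
  shows "- E * (p - q)\<^sup>2 / (2 * p) \<le> e\<^sup>2 * (p / 2 * (w - v)\<^sup>2 + (p - q) * v * (w - v))"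
proof -
  have "e\<^sup>2 * (p / 2 * (w - v)\<^sup>2 + (p - q) * v * (w - v))
      = e\<^sup>2 * (p * (w - v) + (p - q) * v)\<^sup>2 / (2 * p) - (e\<^sup>2 * v\<^sup>2) * (p - q)\<^sup>2 / (2 * p)"
    using assms by (simp add: field_simps power2_eq_square)
  moreover have "(e\<^sup>2 * v\<^sup>2) * (p - q)\<^sup>2 / (2 * p) \<le> E * (p - q)\<^sup>2 / (2 * p)"
    using assms by (intro divide_right_mono mult_right_mono) auto
  moreover have "0 \<le> e\<^sup>2 * (p * (w - v) + (p - q) * v)\<^sup>2 / (2 * p)"
    using assms by simp
  ultimately show ?thesis by simp
qed

lemma relative_kinetic_ge_linear:
  fixes e p q w v wb E :: real
  assumes "0 \<le> p" "p \<le> q" "\<bar>w\<bar> \<le> wb" "e\<^sup>2 * wb\<^sup>2 \<le> E"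
  shows "- E * (q - p) / 4 \<le> e\<^sup>2 * (p / 2 * (w - v)\<^sup>2 + (p - q) * v * (w - v))"
proof -
  have "4 * (v * (w - v)) \<le> w\<^sup>2"
    using zero_le_power2[of "w - 2 * v"] by (simp add: power2_eq_square algebra_simps)
  also have "\<dots> \<le> wb\<^sup>2"
    using power_mono[OF assms(3) abs_ge_zero, of 2] by simp
  finally have "(q - p) * (e\<^sup>2 * (4 * (v * (w - v)))) \<le> (q - p) * (e\<^sup>2 * wb\<^sup>2)"
    using assms by (intro mult_left_mono) auto
  also have "\<dots> \<le> (q - p) * E"
    using assms by (intro mult_left_mono) auto
  finally have "- E * (q - p) / 4 \<le> e\<^sup>2 * ((p - q) * v * (w - v))"
    by (simp add: field_simps)
  moreover have "0 \<le> e\<^sup>2 * (p / 2 * (w - v)\<^sup>2)"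
    using assms by simp
  ultimately show ?thesis by (simp add: algebra_simps)
qed

lemma relative_energy_density_ge:
  fixes P :: "real \<Rightarrow> real"
  assumes P1: "\<And>t. rlo \<le> t \<Longrightarrow> t \<le> rhi \<Longrightarrow> P differentiable (at t)"
    and P2: "\<And>t. rlo \<le> t \<Longrightarrow> t \<le> rhi \<Longrightarrow> deriv P differentiable (at t)"
    and curvature: "\<And>t. rlo \<le> t \<Longrightarrow> t \<le> rhi \<Longrightarrow> 4 * (epsb\<^sup>2 * wb\<^sup>2) \<le> t * deriv (deriv P) t"
    and "0 < rlo" "rlo \<le> p" "p \<le> rhi" "rlo \<le> q" "q \<le> rhi"
    and "\<bar>w\<bar> \<le> wb" "\<bar>v\<bar> \<le> wb" "\<bar>e\<bar> \<le> epsb"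
  shows "epsb\<^sup>2 * wb\<^sup>2 * (p - q)\<^sup>2 / rhi \<le> relative_energy_density P e p w q v"
proof -
  define E K B where "E = epsb\<^sup>2 * wb\<^sup>2"
    and "K = e\<^sup>2 * (p / 2 * (w - v)\<^sup>2 + (p - q) * v * (w - v))"
    and "B = P p - P q - deriv P q * (p - q)"
  have pq: "0 < p" "0 < q" "0 \<le> E" using assms by (auto simp: E_def)
  have B: "2 * E * (p - q)\<^sup>2 \<le> max p q * B"
    unfolding B_def using taylor_remainder_lower_bound[OF P1 P2 curvature] assms pq
    by (simp add: E_def)
  have "e\<^sup>2 \<le> epsb\<^sup>2" using power_mono[OF \<open>\<bar>e\<bar> \<le> epsb\<close> abs_ge_zero, of 2] by simp
  moreover have "v\<^sup>2 \<le> wb\<^sup>2" using power_mono[OF \<open>\<bar>v\<bar> \<le> wb\<close> abs_ge_zero, of 2] by simp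
  ultimately have ev: "e\<^sup>2 * v\<^sup>2 \<le> E" "e\<^sup>2 * wb\<^sup>2 \<le> E"
    unfolding E_def by (auto intro: mult_mono)
  have K_quadratic: "- E * (p - q)\<^sup>2 / (2 * p) \<le> K"
    unfolding K_def using relative_kinetic_ge_quadratic[OF pq(1) ev(1)] .
  have "E * (p - q)\<^sup>2 / rhi \<le> K + B"
  proof (cases "q \<le> p")
    case True
    then have "2 * (E * (p - q)\<^sup>2 / p) \<le> B" using B pq by (simp add: max_def field_simps)
    moreover have "E * (p - q)\<^sup>2 / rhi \<le> E * (p - q)\<^sup>2 / p"
      using assms pq by (intro divide_left_mono) auto
    moreover have "- E * (p - q)\<^sup>2 / (2 * p) = - (E * (p - q)\<^sup>2 / p) / 2" by simp
    moreover have "0 \<le> E * (p - q)\<^sup>2 / p" using pq by simp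
    ultimately show ?thesis using K_quadratic by linarith
  next
    case False
    then have "2 * (E * (p - q)\<^sup>2 / q) \<le> B" using B pq by (simp add: max_def field_simps)
    moreover have "E * (p - q)\<^sup>2 / rhi \<le> E * (p - q)\<^sup>2 / q"
      using assms pq by (intro divide_left_mono) auto
    moreover have "- E * (p - q)\<^sup>2 / q \<le> K"
    txt \<open>The completed square alone fails once \<open>q > 2 p\<close>; there the gap \<open>q - p\<close> is large
      and the crude bound \<open>|w| \<le> wb\<close> on the kinetic part suffices.\<close>
    proof (cases "q \<le> 2 * p")
      case True
      then have "E * (p - q)\<^sup>2 / (2 * p) \<le> E * (p - q)\<^sup>2 / q"
        using pq by (intro divide_left_mono) auto
      then show ?thesis using K_quadratic by simp
    next
      case small_p: False
      have "E * (q - p) * q \<le> E * (q - p) * (4 * (q - p))"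
        using small_p \<open>\<not> q \<le> p\<close> pq by (intro mult_left_mono) auto
      then have "E * (q - p) / 4 \<le> E * (p - q)\<^sup>2 / q"
        using pq by (simp add: field_simps power2_eq_square)
      then show ?thesis unfolding K_def
        using relative_kinetic_ge_linear[of p q w wb e E v] \<open>\<not> q \<le> p\<close> pq assms ev by simp
    qed
    ultimately show ?thesis by simp
  qed
  then show ?thesis by (simp add: relative_energy_density_def E_def K_def B_def)
qed

lemma friction_le_relative_energy_density:
  fixes P :: "real \<Rightarrow> real"
  assumes P1: "\<And>t. rlo \<le> t \<Longrightarrow> t \<le> rhi \<Longrightarrow> P differentiable (at t)"
    and P2: "\<And>t. rlo \<le> t \<Longrightarrow> t \<le> rhi \<Longrightarrow> deriv P differentiable (at t)"
    and curvature: "\<And>t. rlo \<le> t \<Longrightarrow> t \<le> rhi \<Longrightarrow> 4 * (epsb\<^sup>2 * wb\<^sup>2) \<le> t * deriv (deriv P) t"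
    and "0 < rlo" "rlo \<le> p" "p \<le> rhi" "rlo \<le> q" "q \<le> rhi"
    and "\<bar>w\<bar> \<le> wb" "\<bar>v\<bar> \<le> wb" "\<bar>e\<bar> \<le> epsb" "0 < epsb"
    and "0 \<le> gm" "gm \<le> ghi" "0 \<le> av"
  shows "- (gm * (\<bar>w\<bar> * w - \<bar>v\<bar> * v) * av * (p * w - q * v))
    \<le> 3 * ghi * wb * rhi / (rlo * epsb\<^sup>2) * (av * relative_energy_density P e p w q v)
      - 2 * (1/16) * (gm * av * q * (\<bar>w\<bar> + \<bar>v\<bar>) * (w - v)\<^sup>2)"
proof -
  define C where "C = 3 * ghi * wb * rhi / (rlo * epsb\<^sup>2)"
  have "0 < rhi" "0 \<le> wb" "0 \<le> C" using assms by (auto simp: C_def)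
  have "- (gm * (\<bar>w\<bar> * w - \<bar>v\<bar> * v) * av * (p * w - q * v))
        + 2 * (1/16) * (gm * av * q * (\<bar>w\<bar> + \<bar>v\<bar>) * (w - v)\<^sup>2)
      = gm * av * (q * (\<bar>w\<bar> + \<bar>v\<bar>) * (w - v)\<^sup>2 / 8 - (\<bar>w\<bar> * w - \<bar>v\<bar> * v) * (p * w - q * v))"
    by (simp add: field_simps)
  also have "\<dots> \<le> gm * av * (25/12 * wb^3 * (p - q)\<^sup>2 / rlo)"
    using friction_density_le[of rlo p w wb v q] assms by (intro mult_left_mono) auto
  also have "\<dots> \<le> ghi * av * (3 * wb^3 * (p - q)\<^sup>2 / rlo)"
    using assms \<open>0 \<le> wb\<close> by (intro mult_mono divide_right_mono) auto
  also have "\<dots> = C * av * (epsb\<^sup>2 * wb\<^sup>2 * (p - q)\<^sup>2 / rhi)"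
    using assms \<open>0 < rhi\<close> by (simp add: C_def field_simps power2_eq_square power3_eq_cube)
  also have "\<dots> \<le> C * av * relative_energy_density P e p w q v"
    using relative_energy_density_ge[OF P1 P2 curvature] assms \<open>0 \<le> C\<close>
    by (intro mult_left_mono) auto
  finally show ?thesis by (simp add: C_def)
qed

lemma borel_measurable_lebesgue_on_AE:
  fixes f g :: "real \<Rightarrow> real"
  assumes S: "S \<in> sets lebesgue" and f: "f \<in> borel_measurable (lebesgue_on S)"
    and ae: "AE x in lebesgue_on S. f x = g x"
  shows "g \<in> borel_measurable (lebesgue_on S)"
proof -
  have S': "S \<inter> space lebesgue \<in> sets lebesgue" using S by simp
  have "(\<lambda>x. indicator S x *\<^sub>R f x) \<in> borel_measurable lebesgue"
    using f borel_measurable_restrict_space_iff[OF S'] by blast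
  moreover have "AE x in lebesgue. indicator S x *\<^sub>R f x = indicator S x *\<^sub>R g x"
    using ae AE_restrict_space_iff[OF S'] by (auto simp: indicator_def elim!: eventually_mono)
  ultimately have "(\<lambda>x. indicator S x *\<^sub>R g x) \<in> borel_measurable lebesgue"
    by (rule borel_measurable_AE)
  then show ?thesis using borel_measurable_restrict_space_iff[OF S'] by blast
qed

lemma borel_measurable_continuous_on_comp_AE:
  fixes f g :: "real \<Rightarrow> real"
  assumes f: "continuous_on {lo..hi} f" and "lo \<le> hi" and S: "S \<in> sets lebesgue"
    and g: "g \<in> borel_measurable (lebesgue_on S)" and range: "AE x in lebesgue_on S. g x \<in> {lo..hi}"
  shows "(\<lambda>x. f (g x)) \<in> borel_measurable (lebesgue_on S)"
proof -
  define clamp where "clamp t = max lo (min hi t)" for t :: real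
  have "continuous_on UNIV (\<lambda>t. f (clamp t))"
    using \<open>lo \<le> hi\<close>
    by (intro continuous_on_compose2[OF f]) (auto simp: clamp_def intro!: continuous_intros)
  then have "(\<lambda>x. f (clamp (g x))) \<in> borel_measurable (lebesgue_on S)"
    using g by (rule borel_measurable_continuous_on)
  moreover have "AE x in lebesgue_on S. f (clamp (g x)) = f (g x)"
    using range by eventually_elim (auto simp: clamp_def)
  ultimately show ?thesis by (rule borel_measurable_lebesgue_on_AE[OF S])
qed

definition ae_bounded :: "'a measure \<Rightarrow> ('a \<Rightarrow> real) \<Rightarrow> bool" where
  "ae_bounded M f \<longleftrightarrow> (\<exists>B. AE x in M. \<bar>f x\<bar> \<le> B)"

lemma ae_boundedI: "AE x in M. \<bar>f x\<bar> \<le> B \<Longrightarrow> ae_bounded M f"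
  unfolding ae_bounded_def by blast

lemma ae_bounded_const: "ae_bounded M (\<lambda>x. c)"
  by (rule ae_boundedI[where B = "\<bar>c\<bar>"]) simp

lemma ae_bounded_add:
  assumes "ae_bounded M f" "ae_bounded M g"
  shows "ae_bounded M (\<lambda>x. f x + g x)"
proof -
  obtain B C where "AE x in M. \<bar>f x\<bar> \<le> B" "AE x in M. \<bar>g x\<bar> \<le> C"
    using assms unfolding ae_bounded_def by blast
  then have "AE x in M. \<bar>f x + g x\<bar> \<le> B + C" by eventually_elim linarith
  then show ?thesis by (rule ae_boundedI)
qed

lemma ae_bounded_mult:
  assumes "ae_bounded M f" "ae_bounded M g"
  shows "ae_bounded M (\<lambda>x. f x * g x)"
proof -
  obtain B C where "AE x in M. \<bar>f x\<bar> \<le> B" "AE x in M. \<bar>g x\<bar> \<le> C"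
    using assms unfolding ae_bounded_def by blast
  then have "AE x in M. \<bar>f x * g x\<bar> \<le> B * C" by eventually_elim (simp add: abs_mult mult_mono')
  then show ?thesis by (rule ae_boundedI)
qed

lemma ae_bounded_uminus: "ae_bounded M f \<Longrightarrow> ae_bounded M (\<lambda>x. - f x)"
  by (simp add: ae_bounded_def)

lemma ae_bounded_diff: "ae_bounded M f \<Longrightarrow> ae_bounded M g \<Longrightarrow> ae_bounded M (\<lambda>x. f x - g x)"
  using ae_bounded_add[of M f "\<lambda>x. - g x"] ae_bounded_uminus[of M g] by simp

lemma ae_bounded_abs: "ae_bounded M f \<Longrightarrow> ae_bounded M (\<lambda>x. \<bar>f x\<bar>)"
  by (simp add: ae_bounded_def)

lemma ae_bounded_power: "ae_bounded M f \<Longrightarrow> ae_bounded M (\<lambda>x. f x ^ n)"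
  by (induction n) (simp_all add: ae_bounded_const ae_bounded_mult)

lemma ae_bounded_divide: "ae_bounded M f \<Longrightarrow> ae_bounded M (\<lambda>x. f x / c)"
  using ae_bounded_mult[OF _ ae_bounded_const, of M f "1 / c"] by simp

lemmas ae_bounded_intros =
  ae_bounded_const ae_bounded_add ae_bounded_diff ae_bounded_mult
  ae_bounded_abs ae_bounded_power ae_bounded_divide

lemma ae_bounded_continuous_on_comp:
  fixes f :: "'b::topological_space \<Rightarrow> real"
  assumes "continuous_on K f" "compact K" "AE x in M. g x \<in> K"
  shows "ae_bounded M (\<lambda>x. f (g x))"
proof -
  obtain B where B: "\<forall>y\<in>f ` K. \<bar>y\<bar> \<le> B"
    using compact_imp_bounded[OF compact_continuous_image[OF assms(1,2)]]
    by (auto simp: bounded_real)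
  have "AE x in M. \<bar>f (g x)\<bar> \<le> B" using assms(3) by eventually_elim (use B in auto)
  then show ?thesis by (rule ae_boundedI)
qed

lemma integrable_lebesgue_on_Icc_ae_bounded:
  fixes f :: "real \<Rightarrow> real"
  assumes "f \<in> borel_measurable (lebesgue_on {a..b})" "ae_bounded (lebesgue_on {a..b}) f"
  shows "integrable (lebesgue_on {a..b}) f"
proof -
  interpret finite_measure "lebesgue_on {a..b}" by (rule finite_measure_lebesgue_on) simp
  show ?thesis using assms integrable_const_bound[of f] unfolding ae_bounded_def by auto
qed

lemma smooth_pos_differentiable:
  assumes "smooth_pos P" "0 < x"
  shows "P differentiable (at x)" "deriv P differentiable (at x)"
proof -
  have "(deriv ^^ 0) P differentiable (at x)" "(deriv ^^ 1) P differentiable (at x)"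
    using assms unfolding smooth_pos_def by blast+
  then show "P differentiable (at x)" "deriv P differentiable (at x)" by simp_all
qed

lemma smooth_pos_continuous_on:
  assumes "smooth_pos P" "S \<subseteq> {0<..}"
  shows "continuous_on S P" "continuous_on S (deriv P)"
  using assms smooth_pos_differentiable
  by (auto intro!: continuous_at_imp_continuous_on differentiable_imp_continuous_within)

context
  fixes rho_lo rho_hi wb a_hi B g l :: real and P a z rho w rh wh :: "real \<Rightarrow> real"
  assumes rho_range: "0 < rho_lo" "rho_lo \<le> rho_hi"
    and smooth: "smooth_pos P"
    and [measurable]:
      "a \<in> borel_measurable (lebesgue_on {0..l})" "z \<in> borel_measurable (lebesgue_on {0..l})"
      "rho \<in> borel_measurable (lebesgue_on {0..l})" "w \<in> borel_measurable (lebesgue_on {0..l})"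
      "rh \<in> borel_measurable (lebesgue_on {0..l})" "wh \<in> borel_measurable (lebesgue_on {0..l})"
    and a: "\<And>x. x \<in> {0..l} \<Longrightarrow> 0 \<le> a x \<and> a x \<le> a_hi"
    and gz: "\<And>x. x \<in> {0..l} \<Longrightarrow> \<bar>g * z x\<bar> \<le> B"
    and bounds: "AE x in lebesgue_on {0..l}. rho_lo \<le> rho x \<and> rho x \<le> rho_hi
                 \<and> rho_lo \<le> rh x \<and> rh x \<le> rho_hi
                 \<and> - wb \<le> w x \<and> w x \<le> wb \<and> - wb \<le> wh x \<and> wh x \<le> wb"
begin

lemma AE_densities_in_range:
  "AE x in lebesgue_on {0..l}. rho x \<in> {rho_lo..rho_hi}"
  "AE x in lebesgue_on {0..l}. rh x \<in> {rho_lo..rho_hi}"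
  using bounds by (auto elim!: eventually_mono)

lemma continuous_on_pressure:
  "continuous_on {rho_lo..rho_hi} P" "continuous_on {rho_lo..rho_hi} (deriv P)"
  using rho_range by (intro smooth_pos_continuous_on[OF smooth]; auto)+

lemma borel_measurable_pressure_comp [measurable]:
  "(\<lambda>x. P (rho x)) \<in> borel_measurable (lebesgue_on {0..l})"
  "(\<lambda>x. P (rh x)) \<in> borel_measurable (lebesgue_on {0..l})"
  "(\<lambda>x. deriv P (rh x)) \<in> borel_measurable (lebesgue_on {0..l})"
  using borel_measurable_continuous_on_comp_AE[OF continuous_on_pressure(1) rho_range(2)]
    borel_measurable_continuous_on_comp_AE[OF continuous_on_pressure(2) rho_range(2)]
    AE_densities_in_range by auto

lemma ae_bounded_data:
  "ae_bounded (lebesgue_on {0..l}) a" "ae_bounded (lebesgue_on {0..l}) (\<lambda>x. g * z x)"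
  "ae_bounded (lebesgue_on {0..l}) rho" "ae_bounded (lebesgue_on {0..l}) rh"
  "ae_bounded (lebesgue_on {0..l}) w" "ae_bounded (lebesgue_on {0..l}) wh"
  "ae_bounded (lebesgue_on {0..l}) (\<lambda>x. P (rho x))" "ae_bounded (lebesgue_on {0..l}) (\<lambda>x. P (rh x))"
  "ae_bounded (lebesgue_on {0..l}) (\<lambda>x. deriv P (rh x))"
proof -
  have "AE x in lebesgue_on {0..l}. \<bar>a x\<bar> \<le> a_hi \<and> \<bar>g * z x\<bar> \<le> B"
    using AE_space[of "lebesgue_on {0..l}"] by eventually_elim (use a gz in force)
  then show "ae_bounded (lebesgue_on {0..l}) a" "ae_bounded (lebesgue_on {0..l}) (\<lambda>x. g * z x)"
    unfolding ae_bounded_def by (auto elim!: eventually_mono)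
  have "AE x in lebesgue_on {0..l}. \<bar>rho x\<bar> \<le> rho_hi \<and> \<bar>rh x\<bar> \<le> rho_hi \<and> \<bar>w x\<bar> \<le> wb \<and> \<bar>wh x\<bar> \<le> wb"
    using bounds by eventually_elim (use rho_range in auto)
  then show "ae_bounded (lebesgue_on {0..l}) rho" "ae_bounded (lebesgue_on {0..l}) rh"
    "ae_bounded (lebesgue_on {0..l}) w" "ae_bounded (lebesgue_on {0..l}) wh"
    unfolding ae_bounded_def by (auto elim!: eventually_mono)
  show "ae_bounded (lebesgue_on {0..l}) (\<lambda>x. P (rho x))"
    by (rule ae_bounded_continuous_on_comp[OF continuous_on_pressure(1) compact_Icc
          AE_densities_in_range(1)])
  show "ae_bounded (lebesgue_on {0..l}) (\<lambda>x. P (rh x))"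
    by (rule ae_bounded_continuous_on_comp[OF continuous_on_pressure(1) compact_Icc
          AE_densities_in_range(2)])
  show "ae_bounded (lebesgue_on {0..l}) (\<lambda>x. deriv P (rh x))"
    by (rule ae_bounded_continuous_on_comp[OF continuous_on_pressure(2) compact_Icc
          AE_densities_in_range(2)])
qed

lemmas integrable_data = integrable_lebesgue_on_Icc_ae_bounded ae_bounded_data ae_bounded_intros

lemma Hrel_eq_intl_relative_energy_density:
  "Hrel l a g z P eps rho w rh wh
    = intl l (\<lambda>x. a x * relative_energy_density P eps (rho x) (w x) (rh x) (wh x))"
proof -
  have "Hrel l a g z P eps rho w rh wh = intl l (\<lambda>x.
      a x * (eps\<^sup>2 * rho x * (w x)\<^sup>2 / 2 + P (rho x) + g * z x * rho x)
      - a x * (eps\<^sup>2 * rh x * (wh x)\<^sup>2 / 2 + P (rh x) + g * z x * rh x)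
      - a x * ((eps\<^sup>2 * (wh x)\<^sup>2 / 2 + deriv P (rh x) + g * z x) * (rho x - rh x)
               + eps\<^sup>2 * rh x * wh x * (w x - wh x)))"
    unfolding Hrel_def Henergy_def intl_def
    by (subst Bochner_Integration.integral_diff; (intro integrable_data; measurable)?)+ (rule refl)
  also have "\<dots> = intl l (\<lambda>x. a x * relative_energy_density P eps (rho x) (w x) (rh x) (wh x))"
    by (intro arg_cong[where f = "intl l"] ext)
      (simp add: relative_energy_density_def power2_eq_square field_simps)
  finally show ?thesis .
qed

lemma friction_le_relative_energy:
  assumes "0 < epsb" "\<bar>eps\<bar> \<le> epsb" "0 \<le> gam" "gam \<le> gam_hi"
    and curvature: "\<And>r. rho_lo \<le> r \<Longrightarrow> r \<le> rho_hi \<Longrightarrow> 4 * (epsb\<^sup>2 * wb\<^sup>2) \<le> r * deriv (deriv P) r"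
  shows "- intl l (\<lambda>x. gam * (\<bar>w x\<bar> * w x - \<bar>wh x\<bar> * wh x) * a x * (rho x * w x - rh x * wh x))
    \<le> 3 * gam_hi * wb * rho_hi / (rho_lo * epsb\<^sup>2) * Hrel l a g z P eps rho w rh wh
      - 2 * Drel l a gam rho w rh wh"
proof -
  let ?M = "lebesgue_on {0..l}"
  let ?C = "3 * gam_hi * wb * rho_hi / (rho_lo * epsb\<^sup>2)"
  have pointwise: "AE x in ?M.
        - (gam * (\<bar>w x\<bar> * w x - \<bar>wh x\<bar> * wh x) * a x * (rho x * w x - rh x * wh x))
      \<le> ?C * (a x * relative_energy_density P eps (rho x) (w x) (rh x) (wh x))
        - 2 * (1/16) * (gam * a x * rh x * (\<bar>w x\<bar> + \<bar>wh x\<bar>) * (w x - wh x)\<^sup>2)"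
    using bounds AE_space[of ?M]
  proof eventually_elim
    case (elim x)
    have "P differentiable (at t)" "deriv P differentiable (at t)" if "rho_lo \<le> t" for t
      using smooth_pos_differentiable[OF smooth] that rho_range by simp_all
    with elim a[of x] show ?case
      by (intro friction_le_relative_energy_density[where rlo = rho_lo and rhi = rho_hi])
        (use assms rho_range in auto)
  qed
  have "integrable ?M (\<lambda>x. a x * relative_energy_density P eps (rho x) (w x) (rh x) (wh x))"
    unfolding relative_energy_density_def by (intro integrable_data) measurable
  moreover have "integrable ?M (\<lambda>x. gam * a x * rh x * (\<bar>w x\<bar> + \<bar>wh x\<bar>) * (w x - wh x)\<^sup>2)"
    by (intro integrable_data) measurable
  moreover have "integrable ?M
      (\<lambda>x. gam * (\<bar>w x\<bar> * w x - \<bar>wh x\<bar> * wh x) * a x * (rho x * w x - rh x * wh x))"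
    by (intro integrable_data) measurable
  ultimately show ?thesis
    using integral_mono_AE[OF _ _ pointwise]
    unfolding Hrel_eq_intl_relative_energy_density Drel_def intl_def by simp
qed

end

theorem lemma4p2:
  fixes rho_lo rho_hi wb epsb a_lo a_hi gb zb gam_lo gam_hi :: real
  assumes "0 < rho_lo" "rho_lo \<le> rho_hi" "0 < wb" "0 < epsb"
    and "0 < a_lo" "a_lo \<le> a_hi" "0 < gb" "0 < zb"
    and "0 < gam_lo" "gam_lo \<le> gam_hi"
  shows "\<exists>C1>0. \<forall>(l::real) (a::real\<Rightarrow>real) (g::real) (z::real\<Rightarrow>real) (P::real\<Rightarrow>real).
     0 < l
     \<and> smooth_pos P \<and> strictly_convex_on {0<..} P
     \<and> (\<forall>r. rho_lo \<le> r \<and> r \<le> rho_hi \<longrightarrow> 4 * epsb\<^sup>2 * wb\<^sup>2 \<le> r * deriv (deriv P) r)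
     \<and> a \<in> borel_measurable (lebesgue_on {0..l}) \<and> z \<in> borel_measurable (lebesgue_on {0..l})
     \<and> (\<forall>x\<in>{0..l}. a_lo \<le> a x \<and> a x \<le> a_hi)
     \<and> (\<forall>x\<in>{0..l}. \<bar>g * z x\<bar> \<le> gb * zb)
     \<longrightarrow> (\<forall>eps gam rho w rh wh.
           0 \<le> eps \<and> eps \<le> epsb \<and> gam_lo \<le> gam \<and> gam \<le> gam_hi
           \<and> L2on l rho \<and> L2on l w \<and> L2on l rh \<and> L2on l wh
           \<and> (AE x in lebesgue_on {0..l}. rho_lo \<le> rho x \<and> rho x \<le> rho_hi
                 \<and> rho_lo \<le> rh x \<and> rh x \<le> rho_hi
                 \<and> - wb \<le> w x \<and> w x \<le> wb \<and> - wb \<le> wh x \<and> wh x \<le> wb)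
           \<longrightarrow> - intl l (\<lambda>x. gam * (\<bar>w x\<bar> * w x - \<bar>wh x\<bar> * wh x) * a x
                              * (rho x * w x - rh x * wh x))
               \<le> C1 * Hrel l a g z P eps rho w rh wh - 2 * Drel l a gam rho w rh wh)"
proof -
  let ?C = "3 * gam_hi * wb * rho_hi / (rho_lo * epsb\<^sup>2)"
  have "0 < ?C"
    using assms by simp
  then show ?thesis
    apply (intro exI[of _ ?C] conjI[OF \<open>0 < ?C\<close>] allI impI, elim conjE)
    apply (rule friction_le_relative_energy[where a_hi = a_hi and B = "gb * zb"])
    using assms apply (simp_all add: L2on_def mult.assoc)
    by (metis atLeastAtMost_iff less_imp_le order_trans)
qed

end
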